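(* Let $k\ge2$ and $\varepsilon>0$, and let $a,b,K,s$, the sets $C_x\subseteq[K]$ ($x\in[k]$) and the randomiser $\mathcal{R}:[k]\to[K]$ be the generalised Hadamard Response with parameter $\varepsilon$ as defined in the context. For a distribution $\mathbf{p}$ on $[k]$, let $\Phi_\varepsilon(\mathbf{p})$ denote the distribution of $\mathcal{R}(x)$ for $x\sim\mathbf{p}$, i.e. $\Phi_\varepsilon(\mathbf{p})(y)=\frac{1}{se^\varepsilon+K-s}\big((e^\varepsilon-1)\sum_{x\in[k]}\mathbf{p}(x)\mathbf{1}\{y\in C_x\}+1\big)$. Then for any two distributions $\mathbf{p},\mathbf{q}$ on $[k]$, \[ \|\Phi_\varepsilon(\mathbf{p})-\Phi_\varepsilon(\mathbf{q})\|_2^2\ge\frac{1}{2s}\Big(\frac{e^\varepsilon-1}{e^\varepsilon+\frac Ks-1}\Big)^2\|\mathbf{p}-\mathbf{q}\|_2^2, \] and if $\mathbf{p}=\mathbf{q}$ then $\|\Phi_\varepsilon(\mathbf{p})-\Phi_\varepsilon(\mathbf{q})\|_2=0$.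
   Context: Generalised Hadamard Response with parameter $\varepsilon>0$ on $[k]$: $a=2^{\lfloor\log_2\min(e^{\varepsilon},2k)\rfloor}$, $b=2^{\lceil\log_2(k/a+1)\rceil}$, $K=ab$, $s=b/2$. Let $H_b$ be the $b\times b$ Sylvester Hadamard matrix and $P_b$ the $b\times b$ all-$(-1)$ matrix; $\bar H_{a,b}\in\{-1,1\}^{K\times K}$ is the $a\times a$ block matrix with $H_b$ on the diagonal blocks and $P_b$ in all off-diagonal blocks. The $a(b-1)\ge k$ rows of $\bar H_{a,b}$ that are not the first row of a diagonal copy of $H_b$ each have exactly $s$ entries $+1$; each $x\in[k]$ is mapped to a distinct such row, and $C_x\subseteq[K]$ is the set of columns where that row equals $+1$. The randomiser is $\Pr[\mathcal{R}(x)=y]=\frac{(e^\varepsilon-1)\mathbf{1}\{y\in C_x\}+1}{se^\varepsilon+K-s}$ for $y\in[K]$. *)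

theory Defs
  imports Complex_Main
begin

text \<open>Conventions: [k] = {0..<k}, [K] = {0..<K}; matrix rows/columns are 0-indexed.\<close>

definition ghr_a :: "nat \<Rightarrow> real \<Rightarrow> nat" where
  "ghr_a k \<epsilon> = 2 ^ nat \<lfloor>log 2 (min (exp \<epsilon>) (2 * real k))\<rfloor>"

definition ghr_b :: "nat \<Rightarrow> real \<Rightarrow> nat" where
  "ghr_b k \<epsilon> = 2 ^ nat \<lceil>log 2 (real k / real (ghr_a k \<epsilon>) + 1)\<rceil>"

definition ghr_K :: "nat \<Rightarrow> real \<Rightarrow> nat" where
  "ghr_K k \<epsilon> = ghr_a k \<epsilon> * ghr_b k \<epsilon>"

definition ghr_s :: "nat \<Rightarrow> real \<Rightarrow> nat" where
  "ghr_s k \<epsilon> = ghr_b k \<epsilon> div 2"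

fun popcount :: "nat \<Rightarrow> nat" where
  "popcount n = (if n = 0 then 0 else n mod 2 + popcount (n div 2))"

text \<open>Entry (i,j) of the Sylvester Hadamard matrix (of any size 2^m with i,j < 2^m):
  (-1) to the number of common one bits of i and j.\<close>
definition sylvester :: "nat \<Rightarrow> nat \<Rightarrow> int" where
  "sylvester i j = (-1) ^ popcount (and i j)"

definition Hbar :: "nat \<Rightarrow> nat \<Rightarrow> nat \<Rightarrow> int" where
  "Hbar b i j = (if i div b = j div b then sylvester (i mod b) (j mod b) else -1)"

text \<open>Rows of \<open>\<bar>H_{a,b}\<close> that are not the first row of a diagonal copy of H_b.\<close>
definition ghr_rows :: "nat \<Rightarrow> real \<Rightarrow> nat set" where
  "ghr_rows k \<epsilon> = {r. r < ghr_K k \<epsilon> \<and> r mod ghr_b k \<epsilon> \<noteq> 0}"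

text \<open>C_x for the row r assigned to x: the columns where row r equals +1.\<close>
definition ghr_C :: "nat \<Rightarrow> real \<Rightarrow> nat \<Rightarrow> nat set" where
  "ghr_C k \<epsilon> r = {j. j < ghr_K k \<epsilon> \<and> Hbar (ghr_b k \<epsilon>) r j = 1}"

text \<open>Randomiser: Pr[R(x) = y], where \<open>row\<close> assigns to each x its row.\<close>
definition ghr_R :: "nat \<Rightarrow> real \<Rightarrow> (nat \<Rightarrow> nat) \<Rightarrow> nat \<Rightarrow> nat \<Rightarrow> real" where
  "ghr_R k \<epsilon> row x y =
     ((exp \<epsilon> - 1) * (if y \<in> ghr_C k \<epsilon> (row x) then 1 else 0) + 1) /
     (real (ghr_s k \<epsilon>) * exp \<epsilon> + real (ghr_K k \<epsilon>) - real (ghr_s k \<epsilon>))"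

definition ghr_Phi :: "nat \<Rightarrow> real \<Rightarrow> (nat \<Rightarrow> nat) \<Rightarrow> (nat \<Rightarrow> real) \<Rightarrow> nat \<Rightarrow> real" where
  "ghr_Phi k \<epsilon> row p y = (\<Sum>x<k. p x * ghr_R k \<epsilon> row x y)"

definition is_distr :: "nat \<Rightarrow> (nat \<Rightarrow> real) \<Rightarrow> bool" where
  "is_distr n p \<longleftrightarrow> (\<forall>x<n. 0 \<le> p x) \<and> (\<Sum>x<n. p x) = 1"

definition sqdist :: "nat \<Rightarrow> (nat \<Rightarrow> real) \<Rightarrow> (nat \<Rightarrow> real) \<Rightarrow> real" where
  "sqdist n p q = (\<Sum>i<n. (p i - q i)^2)"

end

theory Submission
  imports Defs
begin

text \<open>Since \<open>y \<in> C_x\<close> iff \<open>Hbar (row x) y = 1\<close> and \<open>p - q\<close> sums to zero, the constant part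
  of the randomiser cancels, and \<open>\<Phi>(p) - \<Phi>(q)\<close> is a multiple of \<open>\<Sum>x. d x \<cdot> Hbar (row x)\<close>
  with \<open>d = p - q\<close>. Its squared norm is the quadratic form in \<open>d\<close> of the Gram matrix of the
  selected rows. On the columns of block \<open>i\<close>, a row inside block \<open>i\<close> is a Sylvester row other
  than the first, and a row outside it is constantly \<open>-1\<close>. The non-first Sylvester rows are
  orthogonal to each other and to the constant vector, so the Gram matrix is \<open>b I + b E\<^sup>T E\<close>
  with \<open>E i x = [row x \<notin> block i]\<close>. Hence the quadratic form is at least \<open>b \<parallel>d\<parallel>\<^sup>2\<close>,
  and \<open>b = 2 s\<close> gives the stated constant.\<close>

declare popcount.simps[simp del]

lemma popcount_0 [simp]: "popcount 0 = 0"
  by (subst popcount.simps) simp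

lemma popcount_and_rec:
  "popcount (and i j) = of_bool (odd i \<and> odd j) + popcount (and (i div 2) (j div 2))"
proof -
  have and_eq: "and i j = of_bool (odd i \<and> odd j) + 2 * and (i div 2) (j div 2)"
    by (rule and_nat_rec)
  have "popcount (and i j) = and i j mod 2 + popcount (and i j div 2)"
    by (subst popcount.simps) simp
  also have "and i j mod 2 = of_bool (odd i \<and> odd j)"
    by (subst and_eq) auto
  also have "and i j div 2 = and (i div 2) (j div 2)"
    by (subst and_eq) auto
  finally show ?thesis .
qed

lemma sylvester_rec:
  "sylvester i j = (if odd i \<and> odd j then -1 else 1) * sylvester (i div 2) (j div 2)"
  unfolding sylvester_def by (subst popcount_and_rec) (simp add: power_add)

lemma sylvester_0_left [simp]: "sylvester 0 j = 1"
  by (simp add: sylvester_def)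

lemma sylvester_cases: "sylvester i j = 1 \<or> sylvester i j = -1"
  unfolding sylvester_def by (cases "even (popcount (and i j))") auto

lemma sum_lessThan_double:
  fixes f :: "nat \<Rightarrow> 'a::comm_monoid_add"
  shows "(\<Sum>j<2*n. f j) = (\<Sum>j<n. f (2*j) + f (2*j+1))"
  by (induction n) (auto simp: add.assoc)

lemma sum_lessThan_mult_blocks:
  fixes f :: "nat \<Rightarrow> 'a::comm_monoid_add"
  shows "(\<Sum>y<a*b. f y) = (\<Sum>i<a. \<Sum>j<b. f (i*b+j))"
proof -
  have "(\<Sum>j\<in>{i*b..<i*b+b}. f j) = (\<Sum>j<b. f (i*b+j))" for i
    using sum.shift_bounds_nat_ivl[of f 0 "i*b" b] by (simp add: atLeast0LessThan add.commute)
  then show ?thesis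
    using sum.nat_group[of f b a] by (simp add: mult.commute)
qed

lemma sylvester_orthogonal:
  assumes "r < 2^m" "r' < 2^m"
  shows "(\<Sum>j<2^m. sylvester r j * sylvester r' j) = (if r = r' then 2^m else 0)"
  using assms
proof (induction m arbitrary: r r')
  case 0
  then show ?case by simp
next
  case (Suc m)
  define \<sigma> :: int where "\<sigma> = (if odd r = odd r' then 1 else -1)"
  have "(\<Sum>j<2^Suc m. sylvester r j * sylvester r' j)
      = (\<Sum>j<2^m. sylvester r (2*j) * sylvester r' (2*j)
                  + sylvester r (2*j+1) * sylvester r' (2*j+1))"
    by (simp add: sum_lessThan_double)
  also have "\<dots> = (1 + \<sigma>) * (\<Sum>j<2^m. sylvester (r div 2) j * sylvester (r' div 2) j)"
    unfolding sum_distrib_left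
    by (intro sum.cong refl, subst (1 2 3 4) sylvester_rec) (auto simp: \<sigma>_def algebra_simps)
  also have "\<dots> = (if r = r' then 2^Suc m else 0)"
  proof (cases "odd r = odd r'")
    case True
    then have "r = r' \<longleftrightarrow> r div 2 = r' div 2"
      by (metis div_mult_mod_eq mod2_eq_if)
    with True Suc show ?thesis by (simp add: \<sigma>_def)
  next
    case False
    then show ?thesis by (auto simp: \<sigma>_def)
  qed
  finally show ?case .
qed

lemma sylvester_row_sum:
  assumes "r < 2^m" "r \<noteq> 0"
  shows "(\<Sum>j<2^m. sylvester r j) = 0"
  using sylvester_orthogonal[OF assms(1), of 0] assms by simp

lemma Hbar_cases: "Hbar b r y = 1 \<or> Hbar b r y = -1"
  unfolding Hbar_def using sylvester_cases by auto

lemma Hbar_block_inner_product: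
  assumes b: "b = 2^m" and r: "r mod b \<noteq> 0" "r' mod b \<noteq> 0"
  shows "(\<Sum>j<b. Hbar b r (i*b+j) * Hbar b r' (i*b+j))
       = int b * (of_bool (r div b = i \<and> r = r') + of_bool (r div b \<noteq> i \<and> r' div b \<noteq> i))"
proof -
  have rb: "r mod b < 2^m" "r' mod b < 2^m"
    using b by simp_all
  have "(\<Sum>j<b. Hbar b r (i*b+j) * Hbar b r' (i*b+j))
      = (\<Sum>j<b. (if r div b = i then sylvester (r mod b) j else -1)
               * (if r' div b = i then sylvester (r' mod b) j else -1))"
    using b by (intro sum.cong refl) (simp add: Hbar_def)
  also have "\<dots> = int b * (of_bool (r div b = i \<and> r = r') + of_bool (r div b \<noteq> i \<and> r' div b \<noteq> i))"
  proof (cases "r div b = i"; cases "r' div b = i")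
    assume "r div b = i" "r' div b = i"
    then have "r = r' \<longleftrightarrow> r mod b = r' mod b"
      by (metis div_mult_mod_eq)
    with \<open>r div b = i\<close> \<open>r' div b = i\<close> show ?thesis
      using sylvester_orthogonal[OF rb] b by simp
  qed (use b r sylvester_row_sum[OF rb(1)] sylvester_row_sum[OF rb(2)] in \<open>auto simp: sum_negf\<close>)
  finally show ?thesis .
qed

lemma Hbar_gram:
  assumes b: "b = 2^m" and r: "r < a*b" "r mod b \<noteq> 0" "r' mod b \<noteq> 0"
  shows "(\<Sum>y<a*b. Hbar b r y * Hbar b r' y)
       = int b * of_bool (r = r') + int b * (\<Sum>i<a. of_bool (i \<noteq> r div b) * of_bool (i \<noteq> r' div b))"
proof -
  have block: "r div b < a"
    using r by (simp add: less_mult_imp_div_less)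
  have "(\<Sum>y<a*b. Hbar b r y * Hbar b r' y) = (\<Sum>i<a. \<Sum>j<b. Hbar b r (i*b+j) * Hbar b r' (i*b+j))"
    by (rule sum_lessThan_mult_blocks)
  also have "\<dots> = (\<Sum>i<a. int b * of_bool (r div b = i \<and> r = r')
                    + int b * (of_bool (i \<noteq> r div b) * of_bool (i \<noteq> r' div b)))"
    by (intro sum.cong refl) (auto simp: Hbar_block_inner_product[OF b r(2,3)])
  also have "\<dots> = int b * (\<Sum>i<a. of_bool (r div b = i \<and> r = r'))
                + int b * (\<Sum>i<a. of_bool (i \<noteq> r div b) * of_bool (i \<noteq> r' div b))"
    by (simp only: sum.distrib sum_distrib_left)
  also have "(\<Sum>i<a. of_bool (r div b = i \<and> r = r')) = (of_bool (r = r') :: int)"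
    using block by (simp add: of_bool_conj sum.delta)
  finally show ?thesis .
qed

lemma sum_squares_ge_of_gram:
  fixes d :: "'x \<Rightarrow> real" and H :: "'x \<Rightarrow> 'y \<Rightarrow> real" and e :: "'i \<Rightarrow> 'x \<Rightarrow> real"
  assumes "finite X" "B \<ge> 0"
    and gram: "\<And>x x'. x \<in> X \<Longrightarrow> x' \<in> X \<Longrightarrow>
      (\<Sum>y\<in>Y. H x y * H x' y) = B * of_bool (x = x') + B * (\<Sum>i\<in>I. e i x * e i x')"
  shows "B * (\<Sum>x\<in>X. (d x)\<^sup>2) \<le> (\<Sum>y\<in>Y. (\<Sum>x\<in>X. d x * H x y)\<^sup>2)"
proof -
  have "(\<Sum>y\<in>Y. (\<Sum>x\<in>X. d x * H x y)\<^sup>2) = (\<Sum>y\<in>Y. \<Sum>x\<in>X. \<Sum>x'\<in>X. d x * d x' * (H x y * H x' y))"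
    by (simp add: power2_eq_square sum_product algebra_simps)
  also have "\<dots> = (\<Sum>x\<in>X. \<Sum>x'\<in>X. d x * d x' * (\<Sum>y\<in>Y. H x y * H x' y))"
    unfolding sum_distrib_left by (subst sum.swap) (intro sum.cong refl sum.swap)
  also have "\<dots> = (\<Sum>x\<in>X. \<Sum>x'\<in>X. d x * d x' * (B * of_bool (x = x') + B * (\<Sum>i\<in>I. e i x * e i x')))"
    by (simp add: gram)
  also have "\<dots> = B * (\<Sum>x\<in>X. \<Sum>x'\<in>X. d x * d x' * of_bool (x = x'))
                + B * (\<Sum>i\<in>I. \<Sum>x\<in>X. \<Sum>x'\<in>X. (d x * e i x) * (d x' * e i x'))"
    by (subst (2) sum.swap, subst sum.swap)
       (simp add: sum_distrib_left sum.distrib algebra_simps)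
  also have "\<dots> = B * (\<Sum>x\<in>X. (d x)\<^sup>2) + B * (\<Sum>i\<in>I. (\<Sum>x\<in>X. d x * e i x)\<^sup>2)"
    using \<open>finite X\<close> by (simp add: power2_eq_square sum_product)
  also have "\<dots> \<ge> B * (\<Sum>x\<in>X. (d x)\<^sup>2)"
    using \<open>B \<ge> 0\<close> by (simp add: sum_nonneg)
  finally show ?thesis .
qed

definition ghr_norm :: "nat \<Rightarrow> real \<Rightarrow> real" where
  "ghr_norm k \<epsilon> = real (ghr_s k \<epsilon>) * exp \<epsilon> + real (ghr_K k \<epsilon>) - real (ghr_s k \<epsilon>)"

definition ghr_gap :: "nat \<Rightarrow> real \<Rightarrow> real" where
  "ghr_gap k \<epsilon> = (exp \<epsilon> - 1) / ghr_norm k \<epsilon>"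

lemma ghr_b_eq_pow2:
  assumes "k > 0"
  obtains m where "ghr_b k \<epsilon> = 2 ^ Suc m"
proof -
  have "real k / real (ghr_a k \<epsilon>) > 0"
    using assms by (simp add: ghr_a_def)
  then have "nat \<lceil>log 2 (real k / real (ghr_a k \<epsilon>) + 1)\<rceil> > 0"
    by simp
  then show ?thesis
    using that unfolding ghr_b_def by (metis gr0_implies_Suc)
qed

lemma indicator_ghr_C:
  assumes "y < ghr_K k \<epsilon>"
  shows "(if y \<in> ghr_C k \<epsilon> r then 1 else 0 :: real) = (1 + of_int (Hbar (ghr_b k \<epsilon>) r y)) / 2"
  using assms Hbar_cases[of "ghr_b k \<epsilon>" r y] by (auto simp: ghr_C_def)

lemma ghr_R_eq:
  assumes "y < ghr_K k \<epsilon>"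
  shows "ghr_R k \<epsilon> row x y
       = ghr_gap k \<epsilon> / 2 * (1 + of_int (Hbar (ghr_b k \<epsilon>) (row x) y)) + 1 / ghr_norm k \<epsilon>"
  unfolding ghr_R_def ghr_norm_def[symmetric] ghr_gap_def indicator_ghr_C[OF assms]
  by (cases "ghr_norm k \<epsilon> = 0") (simp_all add: field_simps)

lemma ghr_Phi_diff:
  assumes "y < ghr_K k \<epsilon>" and "(\<Sum>x<k. p x) = (\<Sum>x<k. q x)"
  shows "ghr_Phi k \<epsilon> row p y - ghr_Phi k \<epsilon> row q y
       = ghr_gap k \<epsilon> / 2 * (\<Sum>x<k. (p x - q x) * of_int (Hbar (ghr_b k \<epsilon>) (row x) y))"
proof -
  have sum_diff: "(\<Sum>x<k. p x - q x) = 0"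
    using assms(2) by (simp add: sum_subtractf)
  have "ghr_Phi k \<epsilon> row p y - ghr_Phi k \<epsilon> row q y = (\<Sum>x<k. (p x - q x) * ghr_R k \<epsilon> row x y)"
    by (simp add: ghr_Phi_def sum_subtractf algebra_simps)
  also have "\<dots> = (\<Sum>x<k. ghr_gap k \<epsilon> / 2 * ((p x - q x) * of_int (Hbar (ghr_b k \<epsilon>) (row x) y))
                       + (ghr_gap k \<epsilon> / 2 + 1 / ghr_norm k \<epsilon>) * (p x - q x))"
    by (intro sum.cong refl) (simp add: ghr_R_eq[OF assms(1)] ring_distribs mult_ac)
  also have "\<dots> = ghr_gap k \<epsilon> / 2 * (\<Sum>x<k. (p x - q x) * of_int (Hbar (ghr_b k \<epsilon>) (row x) y))"
    by (simp only: sum.distrib sum_distrib_left[symmetric] sum_diff mult_zero_right add_0_right)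
  finally show ?thesis .
qed

lemma ghr_sqdist_Phi:
  assumes "(\<Sum>x<k. p x) = (\<Sum>x<k. q x)"
  shows "sqdist (ghr_K k \<epsilon>) (ghr_Phi k \<epsilon> row p) (ghr_Phi k \<epsilon> row q)
       = (ghr_gap k \<epsilon> / 2)\<^sup>2
         * (\<Sum>y<ghr_K k \<epsilon>. (\<Sum>x<k. (p x - q x) * of_int (Hbar (ghr_b k \<epsilon>) (row x) y))\<^sup>2)"
  unfolding sqdist_def sum_distrib_left
  by (intro sum.cong refl) (simp only: ghr_Phi_diff[OF _ assms] lessThan_iff power_mult_distrib)

lemma ghr_gram_rows:
  assumes "k > 0" and "inj_on row {..<k}" and "row ` {..<k} \<subseteq> ghr_rows k \<epsilon>"
    and "x < k" and "x' < k"
  shows "(\<Sum>y<ghr_K k \<epsilon>. of_int (Hbar (ghr_b k \<epsilon>) (row x) y) * of_int (Hbar (ghr_b k \<epsilon>) (row x') y))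
       = real (ghr_b k \<epsilon>) * of_bool (x = x')
         + real (ghr_b k \<epsilon>) * (\<Sum>i<ghr_a k \<epsilon>. of_bool (i \<noteq> row x div ghr_b k \<epsilon>)
                                              * of_bool (i \<noteq> row x' div ghr_b k \<epsilon>))"
proof -
  obtain m where b: "ghr_b k \<epsilon> = 2 ^ Suc m"
    using ghr_b_eq_pow2 assms(1) by blast
  have rows: "row x < ghr_a k \<epsilon> * ghr_b k \<epsilon>" "row x mod ghr_b k \<epsilon> \<noteq> 0" "row x' mod ghr_b k \<epsilon> \<noteq> 0"
    using assms(3-5) by (auto simp: ghr_rows_def ghr_K_def)
  have row_eq_iff: "row x = row x' \<longleftrightarrow> x = x'"
    using assms(2,4,5) by (auto dest: inj_onD)
  from arg_cong[OF Hbar_gram[OF b rows], of real_of_int] show ?thesis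
    unfolding of_int_sum of_int_mult of_int_add of_int_of_nat_eq of_int_of_bool row_eq_iff ghr_K_def .
qed

lemma ghr_bound_constant:
  assumes "k > 0"
  shows "1 / (2 * real (ghr_s k \<epsilon>))
           * ((exp \<epsilon> - 1) / (exp \<epsilon> + real (ghr_K k \<epsilon>) / real (ghr_s k \<epsilon>) - 1))\<^sup>2
       = (ghr_gap k \<epsilon> / 2)\<^sup>2 * real (ghr_b k \<epsilon>)"
proof -
  obtain m where b: "ghr_b k \<epsilon> = 2 ^ Suc m"
    using ghr_b_eq_pow2 assms by blast
  have s: "ghr_s k \<epsilon> = 2 ^ m"
    by (simp add: ghr_s_def b)
  have "exp \<epsilon> + real (ghr_K k \<epsilon>) / real (ghr_s k \<epsilon>) - 1 = ghr_norm k \<epsilon> / real (ghr_s k \<epsilon>)"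
    by (simp add: ghr_norm_def s field_simps)
  then have "(exp \<epsilon> - 1) / (exp \<epsilon> + real (ghr_K k \<epsilon>) / real (ghr_s k \<epsilon>) - 1)
           = real (ghr_s k \<epsilon>) * ghr_gap k \<epsilon>"
    by (simp add: ghr_gap_def)
  then show ?thesis
    by (simp add: b s power2_eq_square)
qed

theorem lemma4p4:
  fixes k :: nat and \<epsilon> :: real and row :: "nat \<Rightarrow> nat" and p q :: "nat \<Rightarrow> real"
  assumes "k \<ge> 2" and "\<epsilon> > 0"
    and "inj_on row {..<k}" and "row ` {..<k} \<subseteq> ghr_rows k \<epsilon>"
    and "is_distr k p" and "is_distr k q"
  shows "sqdist (ghr_K k \<epsilon>) (ghr_Phi k \<epsilon> row p) (ghr_Phi k \<epsilon> row q)
           \<ge> 1 / (2 * real (ghr_s k \<epsilon>)) *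
             ((exp \<epsilon> - 1) / (exp \<epsilon> + real (ghr_K k \<epsilon>) / real (ghr_s k \<epsilon>) - 1))^2 * sqdist k p q
         \<and> ((\<forall>x<k. p x = q x) \<longrightarrow> sqrt (sqdist (ghr_K k \<epsilon>) (ghr_Phi k \<epsilon> row p) (ghr_Phi k \<epsilon> row q)) = 0)"
proof
  have "k > 0"
    using assms(1) by simp
  have sums: "(\<Sum>x<k. p x) = (\<Sum>x<k. q x)"
    using assms(5,6) by (simp add: is_distr_def)
  have "real (ghr_b k \<epsilon>) * sqdist k p q
      \<le> (\<Sum>y<ghr_K k \<epsilon>. (\<Sum>x<k. (p x - q x) * of_int (Hbar (ghr_b k \<epsilon>) (row x) y))\<^sup>2)"
    unfolding sqdist_def
    by (rule sum_squares_ge_of_gram[where I = "{..<ghr_a k \<epsilon>}"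
          and e = "\<lambda>i x. of_bool (i \<noteq> row x div ghr_b k \<epsilon>)"])
       (simp_all add: ghr_gram_rows[OF \<open>k > 0\<close> assms(3,4)])
  then show "sqdist (ghr_K k \<epsilon>) (ghr_Phi k \<epsilon> row p) (ghr_Phi k \<epsilon> row q)
           \<ge> 1 / (2 * real (ghr_s k \<epsilon>)) *
             ((exp \<epsilon> - 1) / (exp \<epsilon> + real (ghr_K k \<epsilon>) / real (ghr_s k \<epsilon>) - 1))^2 * sqdist k p q"
    unfolding ghr_bound_constant[OF \<open>k > 0\<close>] ghr_sqdist_Phi[OF sums] mult.assoc
    by (rule mult_left_mono) simp
  show "(\<forall>x<k. p x = q x) \<longrightarrow> sqrt (sqdist (ghr_K k \<epsilon>) (ghr_Phi k \<epsilon> row p) (ghr_Phi k \<epsilon> row q)) = 0"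
    by (simp add: ghr_Phi_def sqdist_def)
qed

end
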